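(* Let $K$ be a number field and let $E\subset\mathbb{P}^2$ be the elliptic curve given by the Weierstrass equation $y^2=x^3+ax+b$ with $a,b\in K$, $4a^3+27b^2\neq0$. Let $h(t)\in K[t]$ be a polynomial of degree at least $2$, put $H(t)=h(t)+ah(t)^3+bh(t)^4\in K[t]$, and let $C$ be the projective curve defined by $s^2=H(t)$. Assume that $C$ is smooth (for example when $H(t)$ is separable). Then there exists a non-constant morphism of algebraic curves $\phi:C\to E$.
   Context: For $H\in K[t]$ of degree $n=2g+1>4$ or $n=2g+2>4$, the projective curve defined by $s^2=H(t)$ is obtained by gluing the affine curves $s^2=H(t)$ and $s'^2=t'^{2g+2}H(1/t')$ along $t\neq0$, $t'\neq0$ via $t'=1/t$, $s'=t^{-g-1}s$. When $H$ is separable it is a smooth projective hyperelliptic curve of genus $g\geq2$, with a double cover $\gamma:C\to\mathbb{P}^1$, $(s,t)\mapsto t$. *)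

theory Defs
  imports Complex_Main "HOL-Computational_Algebra.Polynomial"
begin

text \<open>A number field, realised (via a fixed embedding) as a subfield of the complex
numbers that is finite-dimensional over the rationals.\<close>
definition number_field :: "complex set \<Rightarrow> bool" where
  "number_field K \<longleftrightarrow>
     0 \<in> K \<and> 1 \<in> K \<and>
     (\<forall>x\<in>K. \<forall>y\<in>K. x + y \<in> K \<and> x * y \<in> K) \<and>
     (\<forall>x\<in>K. - x \<in> K) \<and> (\<forall>x\<in>K. x \<noteq> 0 \<longrightarrow> inverse x \<in> K) \<and>
     (\<exists>B. finite B \<and> B \<subseteq> K \<and>
        (\<forall>x\<in>K. \<exists>c :: complex \<Rightarrow> rat. x = (\<Sum>v\<in>B. of_rat (c v) * v)))"

definition Kpoly :: "complex set \<Rightarrow> complex poly \<Rightarrow> bool" where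
  "Kpoly K p \<longleftrightarrow> (\<forall>i. coeff p i \<in> K)"

text \<open>Hyperelliptic curve s^2 = H(t): genus-type data, second chart polynomial
  t'^(2g+2) H(1/t').\<close>
definition hyp_g :: "complex poly \<Rightarrow> nat" where
  "hyp_g H = (degree H - 1) div 2"

definition hyp_H2 :: "complex poly \<Rightarrow> complex poly" where
  "hyp_H2 H = monom 1 (2 * hyp_g H + 2 - degree H) * reflect_poly H"

text \<open>Affine curve s^2 = F(t) (complex points, i.e. points over an algebraic closure).\<close>
definition aff_curve :: "complex poly \<Rightarrow> (complex \<times> complex) set" where
  "aff_curve F = {(s, t). s ^ 2 = poly F t}"

text \<open>Points of the projective curve: affine points of the first chart (Inl (s,t)),
  and the points of the second chart with t' = 0 (Inr s').\<close>
type_synonym cpoint = "(complex \<times> complex) + complex"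

definition Cpts :: "complex poly \<Rightarrow> cpoint set" where
  "Cpts H = Inl ` aff_curve H \<union> Inr ` {s. s ^ 2 = poly (hyp_H2 H) 0}"

definition chart1 :: "complex \<times> complex \<Rightarrow> cpoint" where
  "chart1 z = Inl z"

definition chart2 :: "complex poly \<Rightarrow> complex \<times> complex \<Rightarrow> cpoint" where
  "chart2 H z = (if snd z = 0 then Inr (fst z)
                 else Inl (fst z / snd z ^ (hyp_g H + 1), 1 / snd z))"

definition hyp_smooth :: "complex poly \<Rightarrow> bool" where
  "hyp_smooth H \<longleftrightarrow>
     (\<forall>(s, t)\<in>aff_curve H. \<not> (2 * s = 0 \<and> poly (pderiv H) t = 0)) \<and>
     (\<forall>(s, t)\<in>aff_curve (hyp_H2 H). \<not> (2 * s = 0 \<and> poly (pderiv (hyp_H2 H)) t = 0))"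

text \<open>Elements p(t) + s q(t) of the coordinate ring K[s,t]/(s^2 - F(t)).\<close>
definition ev :: "complex poly \<times> complex poly \<Rightarrow> complex \<times> complex \<Rightarrow> complex" where
  "ev g z = poly (fst g) (snd z) + fst z * poly (snd g) (snd z)"

definition Kcoord :: "complex set \<Rightarrow> complex poly \<times> complex poly \<Rightarrow> bool" where
  "Kcoord K g \<longleftrightarrow> Kpoly K (fst g) \<and> Kpoly K (snd g)"

definition proj_eq :: "complex \<times> complex \<times> complex \<Rightarrow> complex \<times> complex \<times> complex \<Rightarrow> bool" where
  "proj_eq v w \<longleftrightarrow> v \<noteq> (0, 0, 0) \<and>
     (\<exists>c. c \<noteq> 0 \<and> w = (c * fst v, c * fst (snd v), c * snd (snd v)))"

definition on_E :: "complex \<Rightarrow> complex \<Rightarrow> complex \<times> complex \<times> complex \<Rightarrow> bool" where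
  "on_E a b v \<longleftrightarrow> v \<noteq> (0, 0, 0) \<and>
     (case v of (X, Y, Z) \<Rightarrow> Y ^ 2 * Z = X ^ 3 + a * X * Z ^ 2 + b * Z ^ 3)"

definition local_rep ::
  "complex set \<Rightarrow> complex poly \<Rightarrow> (complex \<times> complex \<Rightarrow> cpoint) \<Rightarrow>
   (cpoint \<Rightarrow> complex \<times> complex \<times> complex) \<Rightarrow> cpoint \<Rightarrow> bool" where
  "local_rep K F chart phi P \<longleftrightarrow>
     (\<exists>z0\<in>aff_curve F. chart z0 = P \<and>
        (\<exists>g0 g1 g2. Kcoord K g0 \<and> Kcoord K g1 \<and> Kcoord K g2 \<and>
           (ev g0 z0, ev g1 z0, ev g2 z0) \<noteq> (0, 0, 0) \<and>
           (\<forall>z\<in>aff_curve F. (ev g0 z, ev g1 z, ev g2 z) \<noteq> (0, 0, 0) \<longrightarrow>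
               proj_eq (ev g0 z, ev g1 z, ev g2 z) (phi (chart z)))))"

definition is_morphism_C_E ::
  "complex set \<Rightarrow> complex \<Rightarrow> complex \<Rightarrow> complex poly \<Rightarrow>
   (cpoint \<Rightarrow> complex \<times> complex \<times> complex) \<Rightarrow> bool" where
  "is_morphism_C_E K a b H phi \<longleftrightarrow>
     (\<forall>P\<in>Cpts H. on_E a b (phi P) \<and>
        (local_rep K H chart1 phi P \<or> local_rep K (hyp_H2 H) (chart2 H) phi P))"

definition nonconstant_on :: "cpoint set \<Rightarrow> (cpoint \<Rightarrow> complex \<times> complex \<times> complex) \<Rightarrow> bool" where
  "nonconstant_on S phi \<longleftrightarrow> (\<exists>P\<in>S. \<exists>Q\<in>S. \<not> proj_eq (phi P) (phi Q))"

end

(*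
  The substitution x = 1/h(t), y = s/h(t)^2 turns s^2 = h + a h^3 + b h^4 into
  y^2 = x^3 + a x + b after division by h^4; projectively the map is (h : s : h^2).
  Writing H = h u with u = 1 + a h^2 + b h^3, near the zeros of h the same map is
  (s : u : h s), which sends them to the origin (0 : 1 : 0).  In the chart at infinity
  (t' = 1/t, s' = t'^(g+1) s) the triple (h : s : h^2) multiplied by t'^(2 deg h) is regular and
  sends the points at infinity to affine points of E, so the map is nonconstant.
*)

theory Submission
  imports Defs "HOL-Computational_Algebra.Fundamental_Theorem_Algebra"
begin

lemma number_field_sum:
  assumes "number_field K" "\<And>i. i \<in> A \<Longrightarrow> f i \<in> K"
  shows "sum f A \<in> K"
  using assms(2)
  by (induction A rule: infinite_finite_induct) (use assms(1) in \<open>auto simp: number_field_def\<close>)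

lemma Kpoly_0: "number_field K \<Longrightarrow> Kpoly K 0"
  by (simp add: Kpoly_def number_field_def)

lemma Kpoly_1: "number_field K \<Longrightarrow> Kpoly K 1"
  by (simp add: Kpoly_def number_field_def coeff_1)

lemma Kpoly_monom: "number_field K \<Longrightarrow> Kpoly K (monom 1 n)"
  by (simp add: Kpoly_def number_field_def coeff_monom)

lemma Kpoly_add: "number_field K \<Longrightarrow> Kpoly K p \<Longrightarrow> Kpoly K q \<Longrightarrow> Kpoly K (p + q)"
  by (simp add: Kpoly_def number_field_def)

lemma Kpoly_smult: "number_field K \<Longrightarrow> c \<in> K \<Longrightarrow> Kpoly K p \<Longrightarrow> Kpoly K (smult c p)"
  by (simp add: Kpoly_def number_field_def)

lemma Kpoly_mult: "number_field K \<Longrightarrow> Kpoly K p \<Longrightarrow> Kpoly K q \<Longrightarrow> Kpoly K (p * q)"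
  unfolding Kpoly_def coeff_mult
  by (intro allI number_field_sum) (auto simp: number_field_def)

lemma Kpoly_power: "number_field K \<Longrightarrow> Kpoly K p \<Longrightarrow> Kpoly K (p ^ n)"
  by (induction n) (auto intro: Kpoly_mult Kpoly_1)

lemma Kpoly_reflect_poly: "number_field K \<Longrightarrow> Kpoly K p \<Longrightarrow> Kpoly K (reflect_poly p)"
  by (simp add: Kpoly_def number_field_def coeff_reflect_poly)

lemma degree_le_hyp_g: "degree H \<le> 2 * hyp_g H + 2"
  unfolding hyp_g_def by linarith

lemma poly_hyp_H2:
  assumes "x \<noteq> 0"
  shows "poly (hyp_H2 H) x = x ^ (2 * hyp_g H + 2) * poly H (1 / x)"
proof -
  have "poly (hyp_H2 H) x = x ^ (2 * hyp_g H + 2 - degree H) * (x ^ degree H * poly H (inverse x))"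
    using assms by (simp add: hyp_H2_def poly_monom poly_reflect_poly_nz)
  also have "\<dots> = x ^ (2 * hyp_g H + 2) * poly H (1 / x)"
    using degree_le_hyp_g[of H] by (simp add: power_add[symmetric] inverse_eq_divide)
  finally show ?thesis .
qed

lemma poly_hyp_H2_0: "poly (hyp_H2 H) 0 = 0 ^ (2 * hyp_g H + 2 - degree H) * lead_coeff H"
  by (simp add: hyp_H2_def poly_monom)

lemma chart2_in_aff_curve:
  assumes "t \<noteq> 0" "s ^ 2 = poly (hyp_H2 H) t"
  shows "(s / t ^ (hyp_g H + 1)) ^ 2 = poly H (1 / t)"
proof -
  have "(t ^ (hyp_g H + 1)) ^ 2 = t ^ (2 * hyp_g H + 2)"
    by (simp only: power_mult[symmetric]) (simp add: algebra_simps)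
  then show ?thesis
    using assms by (simp add: poly_hyp_H2 power_divide)
qed

lemma ev_Pair [simp]: "ev (p, q) (s, t) = poly p t + s * poly q t"
  by (simp add: ev_def)

lemma proj_eq_refl: "v \<noteq> (0, 0, 0) \<Longrightarrow> proj_eq v v"
  unfolding proj_eq_def by (auto intro!: exI[of _ 1])

lemma proj_eq_scaled_right:
  assumes "(X, Y, Z) \<noteq> (0, 0, 0)" "c \<noteq> 0"
  shows "proj_eq (X, Y, Z) (c * X, c * Y, c * Z)"
  using assms unfolding proj_eq_def by auto

lemma proj_eq_scaled_left:
  assumes "(X, Y, Z) \<noteq> (0, 0, 0)" "c \<noteq> 0"
  shows "proj_eq (c * X, c * Y, c * Z) (X, Y, Z)"
  using assms unfolding proj_eq_def by (auto intro!: exI[of _ "1 / c"])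

lemma local_repI:
  assumes "sP ^ 2 = poly F tP" "chart (sP, tP) = P"
    and "Kcoord K gX" "Kcoord K gY" "Kcoord K gZ"
    and "(ev gX (sP, tP), ev gY (sP, tP), ev gZ (sP, tP)) \<noteq> (0, 0, 0)"
    and "\<And>s t. s ^ 2 = poly F t \<Longrightarrow> (ev gX (s, t), ev gY (s, t), ev gZ (s, t)) \<noteq> (0, 0, 0) \<Longrightarrow>
           proj_eq (ev gX (s, t), ev gY (s, t), ev gZ (s, t)) (phi (chart (s, t)))"
  shows "local_rep K F chart phi P"
  unfolding local_rep_def aff_curve_def using assms by fast

locale weierstrass_pullback =
  fixes K :: "complex set" and a b :: complex and h H :: "complex poly"
  assumes K_number_field: "number_field K"
    and a_in_K: "a \<in> K" and b_in_K: "b \<in> K"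
    and Kpoly_h: "Kpoly K h" and degree_h_pos: "degree h > 0"
    and H_eq: "H = h + smult a (h ^ 3) + smult b (h ^ 4)"
begin

lemma h_nonzero: "h \<noteq> 0"
  using degree_h_pos by auto

definition u :: "complex poly" where
  "u = 1 + smult a (h ^ 2) + smult b (h ^ 3)"

lemma H_eq_mult_u: "H = h * u"
  unfolding H_eq u_def by (simp add: algebra_simps power2_eq_square power3_eq_cube power4_eq_xxxx)

lemma poly_u_at_root: "poly h t = 0 \<Longrightarrow> poly u t = 1"
  by (simp add: u_def)

lemma Kpoly_u: "Kpoly K u"
  unfolding u_def
  by (intro Kpoly_add Kpoly_smult Kpoly_power Kpoly_1 K_number_field a_in_K b_in_K Kpoly_h)

lemma degree_H_le: "degree H \<le> 4 * degree h"
proof -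
  have "degree (h ^ 3) \<le> 4 * degree h" "degree (h ^ 4) \<le> 4 * degree h"
    using degree_power_le[of h 3] degree_power_le[of h 4] by simp_all
  then show ?thesis
    unfolding H_eq using degree_smult_le[of a "h ^ 3"] degree_smult_le[of b "h ^ 4"]
    by (intro degree_add_le) linarith+
qed

lemma coeff_H_top: "coeff H (4 * degree h) = b * lead_coeff h ^ 4"
proof -
  have "coeff (h ^ 3) (4 * degree h) = 0"
    using degree_power_le[of h 3] degree_h_pos by (intro coeff_eq_0) simp
  moreover have "coeff h (4 * degree h) = 0"
    using degree_h_pos by (intro coeff_eq_0) simp
  moreover have "coeff (h ^ 4) (4 * degree h) = lead_coeff h ^ 4"
    using lead_coeff_power[of h 4] degree_power_eq[OF h_nonzero, of 4] by (simp add: mult.commute)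
  ultimately show ?thesis unfolding H_eq by simp
qed

definition e :: nat where
  "e = 2 * degree h - (hyp_g H + 1)"

lemma hyp_g_add_e: "hyp_g H + 1 + e = 2 * degree h"
  using degree_H_le degree_h_pos unfolding e_def hyp_g_def by linarith

definition phi :: "cpoint \<Rightarrow> complex \<times> complex \<times> complex" where
  "phi P = (case P of
      Inl (s, t) \<Rightarrow> if poly h t = 0 then (0, 1, 0) else (poly h t, s, poly h t ^ 2)
    | Inr s' \<Rightarrow> (0, s' * 0 ^ e, lead_coeff h ^ 2))"

lemma on_E_phi_Inl:
  assumes "s ^ 2 = poly H t"
  shows "on_E a b (phi (Inl (s, t)))"
proof (cases "poly h t = 0")
  case False
  have "s ^ 2 * poly h t ^ 2 = poly h t ^ 3 + a * poly h t * (poly h t ^ 2) ^ 2 + b * (poly h t ^ 2) ^ 3"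
    using assms unfolding H_eq
    by (simp add: algebra_simps power2_eq_square power3_eq_cube power4_eq_xxxx)
  then show ?thesis using False by (simp add: phi_def on_E_def)
qed (simp add: phi_def on_E_def)

lemma on_E_phi_Inr:
  assumes "s' ^ 2 = poly (hyp_H2 H) 0"
  shows "on_E a b (phi (Inr s'))"
proof -
  \<comment> \<open>The square of the Y-coordinate is the coefficient of t^(4 deg h) in H, whether b = 0 or not.\<close>
  have top: "0 ^ (4 * degree h - degree H) * lead_coeff H = coeff H (4 * degree h)"
  proof (cases "degree H = 4 * degree h")
    case False
    then show ?thesis using degree_H_le by (simp add: coeff_eq_0)
  qed simp
  have "(s' * 0 ^ e) ^ 2 = 0 ^ (2 * hyp_g H + 2 - degree H + 2 * e) * lead_coeff H"
    using assms by (simp add: poly_hyp_H2_0 power_mult_distrib power_add mult.commute flip: power_mult)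
  also have "2 * hyp_g H + 2 - degree H + 2 * e = 4 * degree h - degree H"
    using hyp_g_add_e degree_le_hyp_g[of H] by linarith
  finally have "(s' * 0 ^ e) ^ 2 = b * lead_coeff h ^ 4"
    using top coeff_H_top by simp
  then show ?thesis
    using h_nonzero by (simp add: phi_def on_E_def power_mult_distrib flip: power_mult)
qed

lemma local_rep_chart1_off_roots:
  assumes "s ^ 2 = poly H t" "poly h t \<noteq> 0"
  shows "local_rep K H chart1 phi (Inl (s, t))"
proof (rule local_repI[where sP=s and tP=t and gX="(h, 0)" and gY="(0, 1)" and gZ="(h ^ 2, 0)"])
  fix s1 t1
  assume on_C: "s1 ^ 2 = poly H t1"
    and nz: "(ev (h, 0) (s1, t1), ev (0, 1) (s1, t1), ev (h ^ 2, 0) (s1, t1)) \<noteq> (0, 0, 0)"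
  then have "poly h t1 \<noteq> 0"
    by (auto simp: H_eq_mult_u)
  then show "proj_eq (ev (h, 0) (s1, t1), ev (0, 1) (s1, t1), ev (h ^ 2, 0) (s1, t1)) (phi (chart1 (s1, t1)))"
    using proj_eq_refl nz by (simp add: phi_def chart1_def)
qed (use assms K_number_field Kpoly_h Kpoly_0 Kpoly_1 Kpoly_power in \<open>simp_all add: Kcoord_def chart1_def\<close>)

lemma local_rep_chart1_roots:
  assumes "s ^ 2 = poly H t" "poly h t = 0"
  shows "local_rep K H chart1 phi (Inl (s, t))"
proof (rule local_repI[where sP=s and tP=t and gX="(0, 1)" and gY="(u, 0)" and gZ="(0, h)"])
  fix s1 t1
  assume "s1 ^ 2 = poly H t1"
    and nz: "(ev (0, 1) (s1, t1), ev (u, 0) (s1, t1), ev (0, h) (s1, t1)) \<noteq> (0, 0, 0)"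
  then have on_C: "s1 ^ 2 = poly h t1 * poly u t1"
    by (simp add: H_eq_mult_u)
  show "proj_eq (ev (0, 1) (s1, t1), ev (u, 0) (s1, t1), ev (0, h) (s1, t1)) (phi (chart1 (s1, t1)))"
  proof (cases "poly h t1 = 0")
    case True
    then show ?thesis
      using on_C proj_eq_refl[of "(0, 1, 0)"] by (simp add: phi_def chart1_def poly_u_at_root)
  next
    case False
    with on_C nz have "s1 \<noteq> 0"
      by auto
    with on_C have "poly h t1 / s1 * poly u t1 = s1"
      by (simp add: field_simps power2_eq_square)
    then show ?thesis
      using proj_eq_scaled_right[of s1 "poly u t1" "s1 * poly h t1" "poly h t1 / s1"] False \<open>s1 \<noteq> 0\<close>
      by (simp add: phi_def chart1_def power2_eq_square)
  qed
qed (use assms K_number_field Kpoly_h Kpoly_u Kpoly_0 Kpoly_1 in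
      \<open>simp_all add: Kcoord_def chart1_def H_eq_mult_u poly_u_at_root\<close>)

lemma chart2_coordinates:
  assumes "t' \<noteq> 0"
  shows "poly (monom 1 (degree h) * reflect_poly h) t' = t' ^ (2 * degree h) * poly h (1 / t')"
    and "s' * poly (monom 1 e) t' = t' ^ (2 * degree h) * (s' / t' ^ (hyp_g H + 1))"
    and "poly (reflect_poly h) t' ^ 2 = t' ^ (2 * degree h) * poly h (1 / t') ^ 2"
proof -
  have refl: "poly (reflect_poly h) t' = t' ^ degree h * poly h (1 / t')"
    using assms by (simp add: poly_reflect_poly_nz inverse_eq_divide)
  have double: "t' ^ (2 * degree h) = t' ^ degree h * t' ^ degree h"
    by (simp add: mult_2 power_add)
  show "poly (monom 1 (degree h) * reflect_poly h) t' = t' ^ (2 * degree h) * poly h (1 / t')"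
    by (simp add: poly_monom refl double)
  show "poly (reflect_poly h) t' ^ 2 = t' ^ (2 * degree h) * poly h (1 / t') ^ 2"
    by (simp add: refl double power_mult_distrib power2_eq_square)
  have "t' ^ (2 * degree h) = t' ^ (hyp_g H + 1) * t' ^ e"
    by (simp add: hyp_g_add_e[symmetric] power_add)
  then show "s' * poly (monom 1 e) t' = t' ^ (2 * degree h) * (s' / t' ^ (hyp_g H + 1))"
    using assms by (simp add: poly_monom)
qed

lemma local_rep_chart2_infinity:
  assumes "s' ^ 2 = poly (hyp_H2 H) 0"
  shows "local_rep K (hyp_H2 H) (chart2 H) phi (Inr s')"
proof (rule local_repI[where sP=s' and tP=0 and gX="(monom 1 (degree h) * reflect_poly h, 0)"
      and gY="(0, monom 1 e)" and gZ="(reflect_poly h ^ 2, 0)"])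
  fix s1 t1
  assume on_C2: "s1 ^ 2 = poly (hyp_H2 H) t1"
  let ?triple = "(ev (monom 1 (degree h) * reflect_poly h, 0) (s1, t1), ev (0, monom 1 e) (s1, t1),
      ev (reflect_poly h ^ 2, 0) (s1, t1))"
  assume nz: "?triple \<noteq> (0, 0, 0)"
  show "proj_eq ?triple (phi (chart2 H (s1, t1)))"
  proof (cases "t1 = 0")
    case True
    then show ?thesis
      using nz proj_eq_refl h_nonzero degree_h_pos by (simp add: phi_def chart2_def poly_monom zero_power)
  next
    case False
    define s where "s = s1 / t1 ^ (hyp_g H + 1)"
    define t where "t = 1 / t1"
    have chart: "chart2 H (s1, t1) = Inl (s, t)"
      using False by (simp add: chart2_def s_def t_def)
    have on_C: "s ^ 2 = poly H t"
      using chart2_in_aff_curve[OF False on_C2] by (simp add: s_def t_def)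
    have triple: "?triple = (t1 ^ (2 * degree h) * poly h t, t1 ^ (2 * degree h) * s,
        t1 ^ (2 * degree h) * poly h t ^ 2)"
      using chart2_coordinates[OF False] by (simp add: s_def t_def)
    have "poly h t \<noteq> 0"
      using nz on_C triple by (auto simp: H_eq_mult_u)
    then show ?thesis
      unfolding triple chart
      using proj_eq_scaled_left[of "poly h t" s "poly h t ^ 2" "t1 ^ (2 * degree h)"] False
      by (simp add: phi_def)
  qed
qed (use assms K_number_field Kpoly_h h_nonzero degree_h_pos Kpoly_0 Kpoly_mult Kpoly_monom Kpoly_power Kpoly_reflect_poly
      in \<open>simp_all add: Kcoord_def chart2_def poly_monom\<close>)

lemma is_morphism: "is_morphism_C_E K a b H phi"
  unfolding is_morphism_C_E_def Cpts_def aff_curve_def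
  using on_E_phi_Inl on_E_phi_Inr local_rep_chart1_off_roots local_rep_chart1_roots
    local_rep_chart2_infinity
  by blast

lemma nonconstant: "nonconstant_on (Cpts H) phi"
proof -
  obtain t0 where root: "poly h t0 = 0"
    using fundamental_theorem_of_algebra[of h] degree_h_pos by (auto simp: constant_degree)
  have "Inl (0, t0) \<in> Cpts H"
    using root by (simp add: Cpts_def aff_curve_def H_eq_mult_u)
  moreover have "phi (Inl (0, t0)) = (0, 1, 0)"
    using root by (simp add: phi_def)
  moreover have "Inr (csqrt (poly (hyp_H2 H) 0)) \<in> Cpts H"
    by (simp add: Cpts_def)
  moreover have "\<not> proj_eq (0, 1, 0) (phi (Inr s'))" for s'
    using h_nonzero by (simp add: phi_def proj_eq_def)
  ultimately show ?thesis
    unfolding nonconstant_on_def by metis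
qed

end

theorem lemma3p6:
  fixes K :: "complex set" and a b :: complex and h H :: "complex poly"
  assumes "number_field K"
    and "a \<in> K" and "b \<in> K"
    and "4 * a ^ 3 + 27 * b ^ 2 \<noteq> 0"
    and "Kpoly K h" and "degree h \<ge> 2"
    and "H = h + smult a (h ^ 3) + smult b (h ^ 4)"
    and "hyp_smooth H"
  shows "\<exists>phi. is_morphism_C_E K a b H phi \<and> nonconstant_on (Cpts H) phi"
proof -
  interpret weierstrass_pullback K a b h H
    using assms by unfold_locales auto
  show ?thesis
    using is_morphism nonconstant by blast
qed

end
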